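(* Let $I\subseteq\mathbb{R}[x_1,\dots,x_n]$ be an ideal. Then there exists a function $\Psi:\mathbb N\to\mathbb N$ such that $\mathrm{TH}_{\Psi(k)}(I)\subseteq \mathrm{TH}_k(\sqrt[\mathbb R]{I})$ for all $k\in\mathbb N$.
   Context: $\mathbb{R}[\mathbf x]=\mathbb{R}[x_1,\dots,x_n]$ and $\mathbb{R}[\mathbf x]_k$ denotes the polynomials of degree at most $k$. The real radical of an ideal $I$ is $\sqrt[\mathbb R]{I}=\{f\in\mathbb{R}[\mathbf x]: f^{2m}+\sum_i g_i^2\in I$ for some $m\in\mathbb N$ and $g_i\in\mathbb{R}[\mathbf x]\}$. A polynomial $h$ is $k$-sos modulo an ideal $J$ if there are $g_1,\dots,g_r\in\mathbb{R}[\mathbf x]_k$ with $h-\sum_i g_i^2\in J$. The $k$-th theta body is $\mathrm{TH}_k(J)=\{p\in\mathbb R^n: l(p)\ge 0$ for every $l\in\mathbb{R}[\mathbf x]_1$ that is $k$-sos modulo $J\}$. *)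

theory Defs
  imports Complex_Main "HOL-Library.Poly_Mapping"
begin

(* Real polynomials in the variables indexed by a finite type 'n:
  monomials are finitely supported exponent vectors, polynomials are finitely
  supported coefficient maps on monomials. *)

type_synonym 'n rpoly = "('n \<Rightarrow>\<^sub>0 nat) \<Rightarrow>\<^sub>0 real"

definition mon_deg :: "('n::finite \<Rightarrow>\<^sub>0 nat) \<Rightarrow> nat" where
  "mon_deg m = (\<Sum>i\<in>UNIV. Poly_Mapping.lookup m i)"

definition deg_le :: "nat \<Rightarrow> 'n::finite rpoly \<Rightarrow> bool" where
  "deg_le k p \<longleftrightarrow> (\<forall>m\<in>Poly_Mapping.keys p. mon_deg m \<le> k)"

definition peval :: "'n::finite rpoly \<Rightarrow> ('n \<Rightarrow> real) \<Rightarrow> real" where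
  "peval p x = (\<Sum>m\<in>Poly_Mapping.keys p. Poly_Mapping.lookup p m * (\<Prod>i\<in>UNIV. x i ^ Poly_Mapping.lookup m i))"

definition is_ideal :: "'n::finite rpoly set \<Rightarrow> bool" where
  "is_ideal I \<longleftrightarrow> 0 \<in> I \<and> (\<forall>a\<in>I. \<forall>b\<in>I. a + b \<in> I) \<and> (\<forall>a\<in>I. \<forall>r. r * a \<in> I)"

definition real_radical :: "'n::finite rpoly set \<Rightarrow> 'n rpoly set" where
  "real_radical I = {f. \<exists>m::nat. \<exists>gs::'n rpoly list.
      f ^ (2 * m) + (\<Sum>g\<leftarrow>gs. g ^ 2) \<in> I}"

definition k_sos_mod :: "nat \<Rightarrow> 'n::finite rpoly set \<Rightarrow> 'n rpoly \<Rightarrow> bool" where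
  "k_sos_mod k J h \<longleftrightarrow> (\<exists>gs::'n rpoly list. (\<forall>g\<in>set gs. deg_le k g) \<and>
      h - (\<Sum>g\<leftarrow>gs. g ^ 2) \<in> J)"

definition theta_body :: "nat \<Rightarrow> 'n::finite rpoly set \<Rightarrow> ('n \<Rightarrow> real) set" where
  "theta_body k J = {p. \<forall>l. deg_le 1 l \<and> k_sos_mod k J l \<longrightarrow> peval l p \<ge> 0}"

end

theory Submission
  imports Defs
begin

(* A linear l that is k-sos modulo the real radical of I is l = \<sigma> + r with
   \<sigma> a sum of squares of degree \<le> 2k and r in the radical of degree \<le> 2k+1.  Such r
   range over a finite-dimensional space, so r = \<Sum> u_b b for a fixed finite set B of
   radical elements.  For a single radical element b with certificate b^(2m) + \<Sigma> g^2 \<in> I,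
   an explicit univariate sum-of-squares identity shows that \<delta> + c b is sos modulo I
   for all \<delta> > 0 and all c, with a degree bound depending only on b.  Hence \<epsilon> + l is
   N-sos modulo I for a uniform N and every \<epsilon> > 0, and a point of TH_N(I) gives
   l(p) \<ge> -\<epsilon> for all \<epsilon>, i.e. l(p) \<ge> 0. *)

definition cst :: "real \<Rightarrow> 'n::finite rpoly" where
  "cst c = Poly_Mapping.single 0 c"

lemma cst_add: "cst (a + b) = cst a + cst b"
  by (simp add: cst_def single_add)

lemma cst_mult: "cst (a * b) = cst a * cst b"
  by (simp add: cst_def mult_single)

lemma cst_one: "cst 1 = 1"
  by (simp add: cst_def)

lemma cst_uminus: "cst (- a) = - cst a"
  by (simp add: cst_def single_uminus)

lemma cst_numeral: "cst (numeral n) = numeral n"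
  by (simp add: cst_def)

lemma cst_power: "cst (a ^ n) = cst a ^ n"
  by (induct n) (simp_all add: cst_one cst_mult)

lemma peval_add: "peval (p + q) x = peval p x + peval q x"
  unfolding peval_def
  by (rule setsum_keys_plus_distrib[where f = "\<lambda>m v. v * (\<Prod>i\<in>UNIV. x i ^ Poly_Mapping.lookup m i)"])
     (simp_all add: algebra_simps)

lemma peval_cst: "peval (cst c) x = c"
  unfolding peval_def cst_def by simp

lemma mon_deg_add: "mon_deg (a + b) = mon_deg a + mon_deg (b::'n::finite \<Rightarrow>\<^sub>0 nat)"
  by (simp add: mon_deg_def lookup_add sum.distrib)

lemma deg_le_mono: "deg_le a p \<Longrightarrow> a \<le> b \<Longrightarrow> deg_le b p"
  unfolding deg_le_def by auto

lemma deg_le_cst: "deg_le a (cst c)"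
  unfolding deg_le_def cst_def by (simp add: mon_deg_def)

lemma deg_le_add: "deg_le a p \<Longrightarrow> deg_le a q \<Longrightarrow> deg_le a (p + q)"
  unfolding deg_le_def using keys_add[of p q] by blast

lemma deg_le_diff: "deg_le a p \<Longrightarrow> deg_le a q \<Longrightarrow> deg_le a (p - q)"
  using deg_le_add[of a p "- q"] unfolding deg_le_def by simp

lemma deg_le_mult: "deg_le a p \<Longrightarrow> deg_le b q \<Longrightarrow> deg_le (a + b) (p * q)"
  unfolding deg_le_def using keys_mult[of p q] by (force simp: mon_deg_add add_mono)

lemma deg_le_scale: "deg_le a p \<Longrightarrow> deg_le a (cst c * p)"
  using deg_le_mult[OF deg_le_cst[of 0]] by simp

lemma deg_le_power: "deg_le a p \<Longrightarrow> deg_le (n * a) (p ^ n)"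
proof (induct n)
  case 0
  show ?case using deg_le_cst[of 0 1] by (simp add: cst_one)
next
  case (Suc n)
  then show ?case using deg_le_mult[of a p "n * a" "p ^ n"] by (simp add: add.commute)
qed

lemma deg_le_exists: "\<exists>a. deg_le a (p::'n::finite rpoly)"
  unfolding deg_le_def by (rule exI[of _ "Max (mon_deg ` Poly_Mapping.keys p)"]) simp

definition sos_le :: "nat \<Rightarrow> 'n::finite rpoly \<Rightarrow> bool" where
  "sos_le k \<sigma> \<longleftrightarrow> (\<exists>gs::'n rpoly list. (\<forall>g\<in>set gs. deg_le k g) \<and> \<sigma> = (\<Sum>g\<leftarrow>gs. g ^ 2))"

lemma k_sos_mod_iff: "k_sos_mod k J h \<longleftrightarrow> (\<exists>\<sigma>. sos_le k \<sigma> \<and> h - \<sigma> \<in> J)"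
  unfolding k_sos_mod_def sos_le_def by blast

lemma sum_list_map_mult_sq:
  "(\<Sum>h\<leftarrow>map (\<lambda>g. a * g) gs. h ^ 2) = a ^ 2 * (\<Sum>g\<leftarrow>gs. g ^ 2 :: 'a::comm_ring_1)"
  by (induct gs) (simp_all add: algebra_simps power2_eq_square)

lemma sos_le_zero: "sos_le k 0"
  unfolding sos_le_def by (intro exI[of _ "[]"]) simp

lemma sos_le_sq: "deg_le k g \<Longrightarrow> sos_le k (g ^ 2)"
  unfolding sos_le_def by (intro exI[of _ "[g]"]) simp

lemma sos_le_add: "sos_le k \<sigma> \<Longrightarrow> sos_le k \<tau> \<Longrightarrow> sos_le k (\<sigma> + \<tau>)"
  unfolding sos_le_def
proof (elim exE conjE)
  fix gs hs :: "'a rpoly list"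
  assume "\<forall>g\<in>set gs. deg_le k g" "\<sigma> = (\<Sum>g\<leftarrow>gs. g ^ 2)" "\<forall>g\<in>set hs. deg_le k g" "\<tau> = (\<Sum>g\<leftarrow>hs. g ^ 2)"
  then show "\<exists>gs. (\<forall>g\<in>set gs. deg_le k g) \<and> \<sigma> + \<tau> = (\<Sum>g\<leftarrow>gs. g ^ 2)"
    by (intro exI[of _ "gs @ hs"]) auto
qed

lemma sos_le_mono: "sos_le a \<sigma> \<Longrightarrow> a \<le> b \<Longrightarrow> sos_le b \<sigma>"
  unfolding sos_le_def using deg_le_mono by blast

lemma sos_le_mult_sq:
  assumes g: "deg_le a g" and \<sigma>: "sos_le b \<sigma>"
  shows "sos_le (a + b) (g ^ 2 * \<sigma>)"
proof -
  obtain gs where gs: "\<forall>h\<in>set gs. deg_le b h" and \<sigma>_eq: "\<sigma> = (\<Sum>h\<leftarrow>gs. h ^ 2)"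
    using \<sigma> unfolding sos_le_def by blast
  have "\<forall>h\<in>set (map (\<lambda>h. g * h) gs). deg_le (a + b) h"
    using gs deg_le_mult[OF g] by auto
  moreover have "g ^ 2 * \<sigma> = (\<Sum>h\<leftarrow>map (\<lambda>h. g * h) gs. h ^ 2)"
    by (simp only: \<sigma>_eq sum_list_map_mult_sq)
  ultimately show ?thesis unfolding sos_le_def by blast
qed

lemma sos_le_scale: "c \<ge> 0 \<Longrightarrow> sos_le k \<sigma> \<Longrightarrow> sos_le k (cst c * \<sigma>)"
  using sos_le_mult_sq[OF deg_le_cst[of 0 "sqrt c"]] by (simp add: cst_power[symmetric])

lemma sos_le_cst: "c \<ge> 0 \<Longrightarrow> sos_le k (cst c)"
  using sos_le_sq[OF deg_le_cst[of k "sqrt c"]] by (simp add: cst_power[symmetric])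

lemma deg_le_sos: "sos_le k \<sigma> \<Longrightarrow> deg_le (2 * k) \<sigma>"
proof -
  have "deg_le (2 * k) (\<Sum>g\<leftarrow>gs. g ^ 2)" if "\<forall>g\<in>set gs. deg_le k g" for gs :: "'a rpoly list"
    using that
  proof (induct gs)
    case Nil
    then show ?case using deg_le_cst[of _ 0] by (simp add: cst_def)
  next
    case (Cons g gs)
    have "deg_le (k + k) (g * g)" using Cons(2) by (intro deg_le_mult) auto
    with Cons show ?case by (simp add: power2_eq_square mult_2 deg_le_add)
  qed
  then show "sos_le k \<sigma> \<Longrightarrow> deg_le (2 * k) \<sigma>" unfolding sos_le_def by blast
qed

lemma sos_le_exists: "\<exists>E. sos_le E (\<Sum>g\<leftarrow>gs. g ^ 2 :: 'n::finite rpoly)"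
proof (induct gs)
  case Nil
  then show ?case using sos_le_zero by auto
next
  case (Cons g gs)
  then obtain a where a: "sos_le a (\<Sum>g\<leftarrow>gs. g ^ 2)" by blast
  obtain b where b: "deg_le b g" using deg_le_exists by blast
  have "sos_le (a + b) (g ^ 2 + (\<Sum>g\<leftarrow>gs. g ^ 2))"
    using sos_le_sq[OF deg_le_mono[OF b]] sos_le_mono[OF a] by (intro sos_le_add) auto
  then show ?case by auto
qed

lemma k_sos_mod_mono: "k_sos_mod a J h \<Longrightarrow> a \<le> b \<Longrightarrow> k_sos_mod b J h"
  unfolding k_sos_mod_iff using sos_le_mono by blast

lemma k_sos_mod_add:
  assumes J: "is_ideal J" and "k_sos_mod k J h" "k_sos_mod k J h'"
  shows "k_sos_mod k J (h + h')"
proof -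
  obtain \<sigma> \<sigma>' where "sos_le k \<sigma>" "h - \<sigma> \<in> J" "sos_le k \<sigma>'" "h' - \<sigma>' \<in> J"
    using assms(2,3) unfolding k_sos_mod_iff by blast
  moreover have "h + h' - (\<sigma> + \<sigma>') = (h - \<sigma>) + (h' - \<sigma>')" by simp
  ultimately show ?thesis
    using J unfolding k_sos_mod_iff is_ideal_def by (metis sos_le_add)
qed

lemma k_sos_mod_sos: "is_ideal J \<Longrightarrow> sos_le k \<sigma> \<Longrightarrow> k_sos_mod k J \<sigma>"
  unfolding k_sos_mod_iff is_ideal_def by auto

lemma square_linear:
  "(cst a + cst b * u) ^ 2 = cst (a ^ 2) + cst (2 * a * b) * u + cst (b ^ 2) * (u :: 'n::finite rpoly) ^ 2"
  by (simp add: power2_eq_square cst_mult cst_numeral algebra_simps)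

lemma square_completion:
  assumes "a \<noteq> 0"
  shows "(cst a + cst (b / (2 * a)) * u) ^ 2 = cst (a ^ 2) + cst b * u + cst ((b / (2 * a)) ^ 2) * u ^ 2"
  using square_linear[of a "b / (2 * a)" u] assms by simp

(* Induction on j: split
   \<delta> = \<delta>/2 + \<delta>/2 and cancel the term c t^(2^(j+1)) by a completed square in t^(2^(j+1)). *)
lemma univ_sos:
  assumes t: "deg_le D t" and \<delta>: "\<delta> > 0"
  shows "\<exists>c\<ge>0. sos_le (2 ^ j * D) (cst \<delta> + t + cst c * t ^ (2 ^ Suc j))"
  using \<delta>
proof (induct j arbitrary: \<delta>)
  case 0
  define a where "a = sqrt \<delta>"
  have a: "a \<noteq> 0" "a ^ 2 = \<delta>" unfolding a_def using 0 by auto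
  have "sos_le D ((cst a + cst (1 / (2 * a)) * t) ^ 2)"
    by (intro sos_le_sq deg_le_add deg_le_cst deg_le_scale t)
  then have "sos_le D (cst \<delta> + t + cst ((1 / (2 * a)) ^ 2) * t ^ 2)"
    unfolding square_completion[OF a(1)] a(2) by (simp add: cst_one)
  then show ?case by (intro exI[of _ "(1 / (2 * a)) ^ 2"]) simp
next
  case (Suc j)
  define u where "u = t ^ 2 ^ Suc j"
  obtain c where c: "c \<ge> 0" and IH: "sos_le (2 ^ j * D) (cst (\<delta> / 2) + t + cst c * u)"
    using Suc(1)[of "\<delta> / 2"] Suc(2) unfolding u_def by auto
  define a where "a = sqrt (\<delta> / 2)"
  have a: "a \<noteq> 0" "a ^ 2 = \<delta> / 2" unfolding a_def using Suc(2) by auto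
  have "deg_le (2 ^ Suc j * D) u" unfolding u_def using deg_le_power[OF t] by simp
  then have "sos_le (2 ^ Suc j * D) ((cst a + cst (- c / (2 * a)) * u) ^ 2)"
    by (intro sos_le_sq deg_le_add deg_le_cst deg_le_scale)
  then have sq: "sos_le (2 ^ Suc j * D) (cst (\<delta> / 2) - cst c * u + cst ((c / (2 * a)) ^ 2) * u ^ 2)"
    unfolding square_completion[OF a(1)] a(2) by (simp add: cst_uminus)
  have "u ^ 2 = t ^ 2 ^ Suc (Suc j)"
    unfolding u_def by (simp add: power_mult[symmetric] mult.commute)
  moreover have "cst \<delta> = cst (\<delta> / 2) + cst (\<delta> / 2)"
    by (simp add: cst_add[symmetric])
  ultimately have "cst \<delta> + t + cst ((c / (2 * a)) ^ 2) * t ^ 2 ^ Suc (Suc j)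
      = (cst (\<delta> / 2) + t + cst c * u) + (cst (\<delta> / 2) - cst c * u + cst ((c / (2 * a)) ^ 2) * u ^ 2)"
    by (simp add: algebra_simps)
  moreover have "sos_le (2 ^ Suc j * D) (cst (\<delta> / 2) + t + cst c * u)"
    using IH by (rule sos_le_mono) simp
  ultimately have "sos_le (2 ^ Suc j * D) (cst \<delta> + t + cst ((c / (2 * a)) ^ 2) * t ^ 2 ^ Suc (Suc j))"
    using sos_le_add[OF _ sq] by metis
  then show ?case by (intro exI[of _ "(c / (2 * a)) ^ 2"]) simp
qed

lemma ideal_mult: "is_ideal I \<Longrightarrow> a \<in> I \<Longrightarrow> r * a \<in> I"
  unfolding is_ideal_def by blast

lemma ideal_neg: "is_ideal I \<Longrightarrow> a \<in> I \<Longrightarrow> - a \<in> I"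
  using ideal_mult[of I a "- 1"] by simp

(* If t^(2m) + \<sigma> \<in> I with \<sigma> a sum of squares, then every \<delta> + t with \<delta> > 0 is sos
   modulo I with a degree bound independent of \<delta>: raise the certificate to exponent
   2^(m+1) and subtract c times it from the identity of univ_sos. *)
lemma sos_mod_of_certificate:
  assumes I: "is_ideal I" and t: "deg_le D t" and \<sigma>: "sos_le E \<sigma>"
    and cert: "t ^ (2 * m) + \<sigma> \<in> I" and \<delta>: "\<delta> > 0"
  shows "k_sos_mod (2 ^ m * D + E) I (cst \<delta> + t)"
proof -
  define e :: nat where "e = 2 ^ m"
  define r where "r = t ^ (e - m)"
  have "m \<le> e" unfolding e_def using less_exp[of m] by simp
  then have "2 * e = (e - m) * 2 + 2 * m" by simp
  then have "t ^ (2 * e) = r ^ 2 * t ^ (2 * m)"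
    unfolding r_def by (simp only: power_add power_mult)
  then have "t ^ (2 * e) + r ^ 2 * \<sigma> = r ^ 2 * (t ^ (2 * m) + \<sigma>)"
    by (simp add: distrib_left)
  then have lifted: "t ^ (2 * e) + r ^ 2 * \<sigma> \<in> I"
    using ideal_mult[OF I cert] by simp
  obtain c where c: "c \<ge> 0" and Q: "sos_le (2 ^ m * D) (cst \<delta> + t + cst c * t ^ (2 * e))"
    using univ_sos[OF t \<delta>, of m] unfolding e_def by auto
  have "sos_le ((e - m) * D + E) (r ^ 2 * \<sigma>)"
    unfolding r_def by (intro sos_le_mult_sq deg_le_power t \<sigma>)
  moreover have "(e - m) * D + E \<le> 2 ^ m * D + E"
    unfolding e_def by (simp add: diff_le_self)
  ultimately have "sos_le (2 ^ m * D + E) (cst c * (r ^ 2 * \<sigma>))"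
    by (intro sos_le_scale c) (rule sos_le_mono)
  then have \<tau>: "sos_le (2 ^ m * D + E) (cst \<delta> + t + cst c * t ^ (2 * e) + cst c * (r ^ 2 * \<sigma>))"
    by (intro sos_le_add sos_le_mono[OF Q]) simp_all
  have "cst \<delta> + t - (cst \<delta> + t + cst c * t ^ (2 * e) + cst c * (r ^ 2 * \<sigma>))
      = - (cst c * (t ^ (2 * e) + r ^ 2 * \<sigma>))"
    by (simp add: algebra_simps)
  also have "\<dots> \<in> I"
    by (intro ideal_neg[OF I] ideal_mult[OF I] lifted)
  finally show ?thesis
    using \<tau> unfolding k_sos_mod_iff by blast
qed

lemma radical_element_perturbation:
  assumes I: "is_ideal I" and b: "b \<in> real_radical I" and db: "deg_le D b"
  shows "\<exists>N. \<forall>c \<delta>. \<delta> > 0 \<longrightarrow> k_sos_mod N I (cst \<delta> + cst c * b)"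
proof -
  obtain m gs where cert: "b ^ (2 * m) + (\<Sum>g\<leftarrow>gs. g ^ 2) \<in> I"
    using b unfolding real_radical_def by blast
  obtain E where \<sigma>: "sos_le E (\<Sum>g\<leftarrow>gs. g ^ 2)"
    using sos_le_exists by blast
  have "k_sos_mod (2 ^ m * D + E) I (cst \<delta> + cst c * b)" if \<delta>: "\<delta> > 0" for c \<delta>
  proof (rule sos_mod_of_certificate[OF I deg_le_scale[OF db] _ _ \<delta>])
    have "c ^ (2 * m) \<ge> 0"
      by (simp add: power_mult)
    then show "sos_le E (cst (c ^ (2 * m)) * (\<Sum>g\<leftarrow>gs. g ^ 2))"
      using sos_le_scale \<sigma> by blast
    have "(cst c * b) ^ (2 * m) + cst (c ^ (2 * m)) * (\<Sum>g\<leftarrow>gs. g ^ 2)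
        = cst (c ^ (2 * m)) * (b ^ (2 * m) + (\<Sum>g\<leftarrow>gs. g ^ 2))"
      by (simp add: power_mult_distrib cst_power distrib_left)
    then show "(cst c * b) ^ (2 * m) + cst (c ^ (2 * m)) * (\<Sum>g\<leftarrow>gs. g ^ 2) \<in> I"
      using ideal_mult[OF I cert] by simp
  qed
  then show ?thesis by blast
qed

lemma poly_sum_single:
  "p = (\<Sum>m\<in>Poly_Mapping.keys p. Poly_Mapping.single m (Poly_Mapping.lookup p m))"
  by (rule poly_mapping_eqI) (simp add: lookup_sum lookup_single when_def in_keys_iff)

lemma finite_monomials: "finite {m::'n::finite \<Rightarrow>\<^sub>0 nat. mon_deg m \<le> D}"
proof -
  let ?M = "{m::'n \<Rightarrow>\<^sub>0 nat. mon_deg m \<le> D}"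
  have "Poly_Mapping.lookup m i \<le> D" if "m \<in> ?M" for m i
    using that member_le_sum[of i UNIV "Poly_Mapping.lookup m"] unfolding mon_deg_def by simp
  then have "Poly_Mapping.lookup ` ?M \<subseteq> {f. \<forall>i. (i \<in> UNIV \<longrightarrow> f i \<in> {0..D}) \<and> (i \<notin> UNIV \<longrightarrow> f i = 0)}"
    by auto
  moreover have "finite {f::'n \<Rightarrow> nat. \<forall>i. (i \<in> UNIV \<longrightarrow> f i \<in> {0..D}) \<and> (i \<notin> UNIV \<longrightarrow> f i = 0)}"
    by (rule finite_set_of_finite_funs) auto
  moreover have "inj_on Poly_Mapping.lookup ?M"
    by (rule inj_onI) (metis poly_mapping_eqI)
  ultimately show ?thesis
    using finite_subset finite_imageD by blast
qed

(* Polynomials of bounded degree live in a finite-dimensional space, so any such set S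
   has a finite subset B of which every element of S is a linear combination. *)
lemma finite_spanning_subset:
  fixes S :: "'n::finite rpoly set"
  assumes "\<And>p. p \<in> S \<Longrightarrow> deg_le D p"
  shows "\<exists>B. finite B \<and> B \<subseteq> S \<and> (\<forall>f\<in>S. \<exists>u. f = (\<Sum>b\<in>B. cst (u b) * b))"
proof -
  interpret V: vector_space "(\<lambda>c p. cst c * p) :: real \<Rightarrow> 'n rpoly \<Rightarrow> 'n rpoly"
    by unfold_locales (simp_all add: cst_add cst_mult cst_one algebra_simps)
  define T where "T = (\<lambda>m. Poly_Mapping.single m (1::real)) ` {m::'n \<Rightarrow>\<^sub>0 nat. mon_deg m \<le> D}"
  have "finite T"
    unfolding T_def using finite_monomials by blast
  have "S \<subseteq> V.span T"
  proof
    fix p assume "p \<in> S"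
    then have "deg_le D p" by (rule assms)
    then have "Poly_Mapping.single m (Poly_Mapping.lookup p m) \<in> V.span T"
      if "m \<in> Poly_Mapping.keys p" for m
      using V.span_scale[OF V.span_base, of "Poly_Mapping.single m 1" T "Poly_Mapping.lookup p m"] that
      unfolding T_def deg_le_def by (auto simp: cst_def mult_single)
    then show "p \<in> V.span T"
      by (subst poly_sum_single) (rule V.span_sum)
  qed
  obtain B where B: "B \<subseteq> S" "V.independent B" "S \<subseteq> V.span B"
    using V.maximal_independent_subset by blast
  have "finite B"
    using V.independent_span_bound[OF \<open>finite T\<close> B(2)] B(1) \<open>S \<subseteq> V.span T\<close> by blast
  then show ?thesis
    using B V.span_finite[of B] by (intro exI[of _ B]) blast
qed

lemma finite_uniform_bound:
  assumes "finite B" and "\<forall>b\<in>B. \<exists>n::nat. P n b" and "\<And>b n n'. P n b \<Longrightarrow> n \<le> n' \<Longrightarrow> P n' b"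
  shows "\<exists>n. \<forall>b\<in>B. P n b"
  using assms(1,2)
proof (induct B rule: finite_induct)
  case empty
  then show ?case by simp
next
  case (insert b B)
  then obtain n n' where "\<forall>b\<in>B. P n b" "P n' b" by auto
  then show ?case
    using assms(3)[of n _ "n + n'"] assms(3)[of n' b "n + n'"] by auto
qed

(* Perturbations \<delta> + \<Sum> u_b b are N-sos modulo I once every \<delta> + c b is: split \<delta>
   evenly among the summands (induction on B). *)
lemma sos_mod_of_combination:
  assumes I: "is_ideal I" and "finite B"
    and B: "\<forall>b\<in>B. \<forall>c \<delta>. \<delta> > 0 \<longrightarrow> k_sos_mod N I (cst \<delta> + cst c * b)"
  shows "\<delta> > 0 \<Longrightarrow> k_sos_mod N I (cst \<delta> + (\<Sum>b\<in>B. cst (u b) * b))"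
  using assms(2,3)
proof (induct B arbitrary: \<delta> rule: finite_induct)
  case empty
  then show ?case by (simp add: k_sos_mod_sos[OF I] sos_le_cst)
next
  case (insert b B)
  have split: "cst \<delta> + (\<Sum>b'\<in>insert b B. cst (u b') * b')
      = (cst (\<delta> / 2) + cst (u b) * b) + (cst (\<delta> / 2) + (\<Sum>b'\<in>B. cst (u b') * b'))"
    using insert(1,2) cst_add[of "\<delta> / 2" "\<delta> / 2"] by (simp add: ac_simps)
  show ?case
    unfolding split by (rule k_sos_mod_add[OF I]) (use insert(3-5) in simp)+
qed

(* Core estimate: there is N such that every h of degree at most d that is k-sos modulo
   the real radical becomes N-sos modulo I after adding any \<epsilon> > 0.  Writing h = \<sigma> + r
   with r in the radical of degree \<le> d + 2k, r is a combination of a fixed finite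
   spanning set of such radical elements, each handled by radical_element_perturbation. *)
lemma radical_sos_perturbation:
  assumes I: "is_ideal I"
  shows "\<exists>N. \<forall>h. deg_le d h \<and> k_sos_mod k (real_radical I) h \<longrightarrow>
           (\<forall>\<epsilon>>0. k_sos_mod N I (cst \<epsilon> + h))"
proof -
  define D where "D = d + 2 * k"
  define S where "S = {f \<in> real_radical I. deg_le D f}"
  obtain B where "finite B" and "B \<subseteq> S" and span: "\<forall>f\<in>S. \<exists>u. f = (\<Sum>b\<in>B. cst (u b) * b)"
    using finite_spanning_subset[of S D] unfolding S_def by blast
  moreover have "\<forall>b\<in>B. \<exists>N. \<forall>c \<delta>. \<delta> > 0 \<longrightarrow> k_sos_mod N I (cst \<delta> + cst c * b)"
    using \<open>B \<subseteq> S\<close> radical_element_perturbation[OF I] unfolding S_def by blast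
  ultimately obtain N where N: "\<forall>b\<in>B. \<forall>c \<delta>. \<delta> > 0 \<longrightarrow> k_sos_mod N I (cst \<delta> + cst c * b)"
    using finite_uniform_bound[of B "\<lambda>N b. \<forall>c \<delta>. \<delta> > 0 \<longrightarrow> k_sos_mod N I (cst \<delta> + cst c * b)"]
      k_sos_mod_mono by blast
  have "k_sos_mod (N + k) I (cst \<epsilon> + h)"
    if h: "deg_le d h" "k_sos_mod k (real_radical I) h" and \<epsilon>: "\<epsilon> > 0" for h \<epsilon>
  proof -
    obtain \<sigma> where \<sigma>: "sos_le k \<sigma>" and rad: "h - \<sigma> \<in> real_radical I"
      using h(2) unfolding k_sos_mod_iff by blast
    have "deg_le D (h - \<sigma>)"
      unfolding D_def using deg_le_mono[OF h(1)] deg_le_mono[OF deg_le_sos[OF \<sigma>]]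
      by (intro deg_le_diff) auto
    then obtain u where u: "h - \<sigma> = (\<Sum>b\<in>B. cst (u b) * b)"
      using span rad unfolding S_def by blast
    have "k_sos_mod (N + k) I \<sigma>"
      using k_sos_mod_sos[OF I sos_le_mono[OF \<sigma>]] by simp
    moreover have "k_sos_mod (N + k) I (cst \<epsilon> + (h - \<sigma>))"
      unfolding u by (rule k_sos_mod_mono[OF sos_mod_of_combination[OF I \<open>finite B\<close> N \<epsilon>]]) simp
    ultimately have "k_sos_mod (N + k) I (\<sigma> + (cst \<epsilon> + (h - \<sigma>)))"
      by (rule k_sos_mod_add[OF I])
    then show ?thesis by simp
  qed
  then show ?thesis by blast
qed

lemma theta_body_subset_of_perturbation:
  assumes "\<forall>l. deg_le 1 l \<and> k_sos_mod k J l \<longrightarrow> (\<forall>\<epsilon>>0. k_sos_mod N I (cst \<epsilon> + l))"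
  shows "theta_body N I \<subseteq> theta_body k J"
proof
  fix p assume p: "p \<in> theta_body N I"
  have "0 \<le> peval l p" if l: "deg_le 1 l" "k_sos_mod k J l" for l
  proof (rule field_le_epsilon)
    fix \<epsilon> :: real assume "\<epsilon> > 0"
    then have "k_sos_mod N I (cst \<epsilon> + l)" and "deg_le 1 (cst \<epsilon> + l)"
      using assms l by (auto intro: deg_le_add deg_le_cst)
    then have "0 \<le> peval (cst \<epsilon> + l) p"
      using p unfolding theta_body_def by blast
    then show "0 \<le> peval l p + \<epsilon>"
      by (simp add: peval_add peval_cst)
  qed
  then show "p \<in> theta_body k J"
    unfolding theta_body_def by blast
qed

theorem mainTheorem6:
  fixes I :: "'n::finite rpoly set"
  assumes "is_ideal I"
  shows "\<exists>\<Psi>::nat \<Rightarrow> nat. \<forall>k. theta_body (\<Psi> k) I \<subseteq> theta_body k (real_radical I)"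
proof -
  have "\<forall>k. \<exists>N. theta_body N I \<subseteq> theta_body k (real_radical I)"
  proof
    fix k
    obtain N where "\<forall>l. deg_le 1 l \<and> k_sos_mod k (real_radical I) l \<longrightarrow>
                        (\<forall>\<epsilon>>0. k_sos_mod N I (cst \<epsilon> + l))"
      using radical_sos_perturbation[OF assms] by blast
    then show "\<exists>N. theta_body N I \<subseteq> theta_body k (real_radical I)"
      using theta_body_subset_of_perturbation by blast
  qed
  then show ?thesis
    by (rule choice)
qed

end
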